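(* Let $v_1,v_2\in\mathbb{R}^n$, $p\geq 2$, $\delta>0$, and $$J=\int_0^1\int_0^1|v_1-(t-s\delta)v_2|^{p-2}\,ds\,dt.$$ Then there exist constants $C_p>0$ and $\delta_0>0$, both depending only on $p$, such that $$J\geq C_p\left(\max\{|v_1|,|v_2|\}\right)^{p-2}\qquad\text{for all }0<\delta\leq\delta_0.$$ *)

theory Defs
  imports "HOL-Analysis.Analysis"
begin

text \<open>Euclidean norm of the vector (v 0, ..., v (n-1)) in R^n, vectors represented
  as functions nat => real (only the first n components matter).\<close>
definition enorm :: "nat \<Rightarrow> (nat \<Rightarrow> real) \<Rightarrow> real" where
  "enorm n v = sqrt (\<Sum>i<n. (v i)\<^sup>2)"

text \<open>Real power x^a for x >= 0 with the usual convention x^0 = 1 (also for x = 0).\<close>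
definition rpow :: "real \<Rightarrow> real \<Rightarrow> real" where
  "rpow x a = (if a = 0 then 1 else x powr a)"

end

theory Submission
  imports Defs
begin

text \<open>Let \<open>M = max |v\<^sub>1| |v\<^sub>2|\<close>. By the triangle inequality, \<open>|v\<^sub>1 - \<tau> v\<^sub>2| < M/8\<close>
  cannot hold both at some \<open>\<tau> \<in> [-1/8, 1/4]\<close> and at some \<open>\<tau> \<in> [5/8, 1]\<close>. Since
  \<open>t - s\<delta> \<in> [t - 1/8, t]\<close> for \<open>\<delta> \<le> 1/8\<close>, one of the strips \<open>t \<in> [0, 1/4]\<close> or
  \<open>t \<in> [3/4, 1]\<close> therefore carries the bound \<open>|v\<^sub>1 - (t - s\<delta>) v\<^sub>2| \<ge> M/8\<close> for all \<open>s\<close>,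
  and integrating over that strip of area \<open>1/4\<close> gives \<open>J \<ge> (1/4) (M/8)\<^bsup>p-2\<^esup>\<close>.\<close>

lemma enorm_nonneg: "0 \<le> enorm n v"
  by (simp add: enorm_def sum_nonneg)

lemma enorm_add_le: "enorm n (\<lambda>i. x i + y i) \<le> enorm n x + enorm n y"
  using L2_set_triangle_ineq[of x y "{..<n}"] by (simp add: enorm_def L2_set_def)

lemma enorm_mult: "enorm n (\<lambda>i. c * x i) = \<bar>c\<bar> * enorm n x"
  by (simp add: enorm_def power_mult_distrib real_sqrt_mult flip: sum_distrib_left)

lemma enorm_minus: "enorm n (\<lambda>i. - x i) = enorm n x"
  by (simp add: enorm_def)

lemma enorm_diff_le: "enorm n (\<lambda>i. x i - y i) \<le> enorm n x + enorm n y"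
  using enorm_add_le[of n x "\<lambda>i. - y i"] by (simp add: enorm_minus)

lemma continuous_on_enorm:
  assumes "\<And>i. continuous_on S (\<lambda>x. f x i)"
  shows "continuous_on S (\<lambda>x. enorm n (f x))"
  unfolding enorm_def by (intro continuous_intros assms)

lemma rpow_nonneg: "0 \<le> rpow x a"
  by (simp add: rpow_def)

lemma rpow_pos: "0 < x \<Longrightarrow> 0 < rpow x a"
  by (simp add: rpow_def)

lemma rpow_mono: "0 \<le> a \<Longrightarrow> 0 \<le> x \<Longrightarrow> x \<le> y \<Longrightarrow> rpow x a \<le> rpow y a"
  by (simp add: rpow_def powr_mono2)

lemma rpow_mult: "0 \<le> x \<Longrightarrow> 0 \<le> y \<Longrightarrow> rpow (x * y) a = rpow x a * rpow y a"
  by (simp add: rpow_def powr_mult)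

lemma continuous_on_rpow:
  assumes "0 \<le> a" "continuous_on S f" "\<And>x. x \<in> S \<Longrightarrow> 0 \<le> f x"
  shows "continuous_on S (\<lambda>x. rpow (f x) a)"
proof (cases "a = 0")
  case False
  then show ?thesis
    using assms by (auto simp: rpow_def intro!: continuous_on_powr')
qed (simp add: rpow_def)

lemma enorm_line_ge_at_one_of_two:
  fixes n :: nat and v1 v2 :: "nat \<Rightarrow> real"
  defines "M \<equiv> max (enorm n v1) (enorm n v2)"
  assumes "\<bar>a\<bar> \<le> 1/4" and "3/8 \<le> \<bar>b - a\<bar>"
  shows "M/8 \<le> enorm n (\<lambda>i. v1 i - a * v2 i) \<or> M/8 \<le> enorm n (\<lambda>i. v1 i - b * v2 i)"
proof -
  let ?A = "enorm n (\<lambda>i. v1 i - a * v2 i)" and ?B = "enorm n (\<lambda>i. v1 i - b * v2 i)"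
  have "enorm n v1 \<le> ?A + \<bar>a\<bar> * enorm n v2"
    using enorm_add_le[of n "\<lambda>i. v1 i - a * v2 i" "\<lambda>i. a * v2 i"] by (simp add: enorm_mult)
  moreover have "\<bar>a\<bar> * enorm n v2 \<le> 1/4 * enorm n v2"
    using assms(2) by (intro mult_right_mono) (auto simp: enorm_nonneg)
  moreover have "\<bar>b - a\<bar> * enorm n v2 \<le> ?A + ?B"
    using enorm_diff_le[of n "\<lambda>i. v1 i - a * v2 i" "\<lambda>i. v1 i - b * v2 i"]
    by (simp add: enorm_mult flip: left_diff_distrib)
  moreover have "3/8 * enorm n v2 \<le> \<bar>b - a\<bar> * enorm n v2"
    using assms(3) by (intro mult_right_mono) (auto simp: enorm_nonneg)
  moreover have "M = enorm n v1 \<or> M = enorm n v2" "enorm n v1 \<le> M" "enorm n v2 \<le> M"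
    unfolding M_def by auto
  ultimately show ?thesis
    using enorm_nonneg[of n v1] enorm_nonneg[of n v2] by linarith
qed

lemma enorm_line_ge_near_zero_or_near_one:
  fixes n :: nat and v1 v2 :: "nat \<Rightarrow> real"
  defines "M \<equiv> max (enorm n v1) (enorm n v2)"
  shows "(\<forall>\<tau>\<in>{-1/8..1/4}. M/8 \<le> enorm n (\<lambda>i. v1 i - \<tau> * v2 i)) \<or>
         (\<forall>\<tau>\<in>{5/8..1}. M/8 \<le> enorm n (\<lambda>i. v1 i - \<tau> * v2 i))"
proof (rule ccontr)
  assume "\<not> ?thesis"
  then obtain a b where ab: "a \<in> {-1/8..1/4}" "b \<in> {5/8..1}"
    and "enorm n (\<lambda>i. v1 i - a * v2 i) < M/8" "enorm n (\<lambda>i. v1 i - b * v2 i) < M/8"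
    by (auto simp: not_le)
  moreover have "M/8 \<le> enorm n (\<lambda>i. v1 i - a * v2 i) \<or> M/8 \<le> enorm n (\<lambda>i. v1 i - b * v2 i)"
    unfolding M_def by (rule enorm_line_ge_at_one_of_two) (use ab in auto)
  ultimately show False
    by linarith
qed

lemma enorm_shifted_line_ge_on_strip:
  fixes n :: nat and v1 v2 :: "nat \<Rightarrow> real"
  defines "M \<equiv> max (enorm n v1) (enorm n v2)"
  assumes "0 \<le> \<delta>" "\<delta> \<le> 1/8"
  obtains a where "0 \<le> a" "a + 1/4 \<le> 1"
    "\<And>t s. t \<in> {a..a+1/4} \<Longrightarrow> s \<in> {0..1} \<Longrightarrow> M/8 \<le> enorm n (\<lambda>i. v1 i - (t - s * \<delta>) * v2 i)"
proof -
  have shift: "0 \<le> s * \<delta> \<and> s * \<delta> \<le> 1/8" if "s \<in> {0..1}" for s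
    using that assms(2,3) mult_mono[of s 1 \<delta> "1/8"] by auto
  from enorm_line_ge_near_zero_or_near_one[of n v1 v2, folded M_def] show ?thesis
  proof
    assume near_zero: "\<forall>\<tau>\<in>{-1/8..1/4}. M/8 \<le> enorm n (\<lambda>i. v1 i - \<tau> * v2 i)"
    show ?thesis
    proof (rule that[of 0])
      fix t s :: real assume "t \<in> {0..0+1/4}" "s \<in> {0..1}"
      then show "M/8 \<le> enorm n (\<lambda>i. v1 i - (t - s * \<delta>) * v2 i)"
        by (intro near_zero[rule_format]) (use shift[of s] in auto)
    qed auto
  next
    assume near_one: "\<forall>\<tau>\<in>{5/8..1}. M/8 \<le> enorm n (\<lambda>i. v1 i - \<tau> * v2 i)"
    show ?thesis
    proof (rule that[of "3/4"])
      fix t s :: real assume "t \<in> {3/4..3/4+1/4}" "s \<in> {0..1}"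
      then show "M/8 \<le> enorm n (\<lambda>i. v1 i - (t - s * \<delta>) * v2 i)"
        by (intro near_one[rule_format]) (use shift[of s] in auto)
    qed auto
  qed
qed

lemma integral2_ge_on_strip:
  fixes F :: "real \<Rightarrow> real \<Rightarrow> real"
  assumes cont: "continuous_on ({a..b} \<times> {c..d}) (\<lambda>(t, s). F t s)"
    and nonneg: "\<And>t s. t \<in> {a..b} \<Longrightarrow> s \<in> {c..d} \<Longrightarrow> 0 \<le> F t s"
    and strip: "a \<le> a'" "a' \<le> b'" "b' \<le> b" and "c \<le> d"
    and lower: "\<And>t s. t \<in> {a'..b'} \<Longrightarrow> s \<in> {c..d} \<Longrightarrow> m \<le> F t s"
  shows "(b' - a') * (d - c) * m \<le> integral {a..b} (\<lambda>t. integral {c..d} (F t))"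
proof -
  define g where "g = (\<lambda>t. integral {c..d} (F t))"
  have F_cont: "continuous_on {c..d} (F t)" if "t \<in> {a..b}" for t
  proof -
    have "continuous_on {c..d} ((\<lambda>(t, s). F t s) \<circ> Pair t)"
      by (intro continuous_on_compose continuous_intros continuous_on_subset[OF cont])
        (use that in auto)
    then show ?thesis
      by (simp add: o_def)
  qed
  have g_cont: "continuous_on {a..b} g"
    using integral_continuous_on_param[of "{a..b}" c d F] cont by (simp add: g_def cbox_interval)
  have g_nonneg: "0 \<le> g t" if "t \<in> {a..b}" for t
    unfolding g_def using that
    by (intro integral_nonneg integrable_continuous_interval F_cont nonneg) auto
  have g_lower: "(d - c) * m \<le> g t" if "t \<in> {a'..b'}" for t
  proof -
    have "integral {c..d} (\<lambda>s. m) \<le> g t"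
      unfolding g_def using that strip
      by (intro integral_le integrable_continuous_interval F_cont lower) auto
    with \<open>c \<le> d\<close> show ?thesis by simp
  qed
  have "(b' - a') * (d - c) * m = integral {a'..b'} (\<lambda>t. (d - c) * m)"
    using strip by simp
  also have "\<dots> \<le> integral {a'..b'} g"
    using strip
    by (intro integral_le g_lower integrable_continuous_interval continuous_on_subset[OF g_cont]) auto
  also have "\<dots> \<le> integral {a..b} g"
    using strip
    by (intro integral_subset_le integrable_continuous_interval continuous_on_subset[OF g_cont])
      (auto intro: g_nonneg)
  finally show ?thesis
    by (simp add: g_def)
qed

lemma integral2_rpow_enorm_shifted_line_ge:
  fixes n :: nat and v1 v2 :: "nat \<Rightarrow> real"
  assumes "0 \<le> q" "0 \<le> \<delta>" "\<delta> \<le> 1/8"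
  shows "1/4 * rpow (1/8) q * rpow (max (enorm n v1) (enorm n v2)) q
    \<le> integral {0..1} (\<lambda>t. integral {0..1}
          (\<lambda>s. rpow (enorm n (\<lambda>i. v1 i - (t - s * \<delta>) * v2 i)) q))"
proof -
  define M where "M = max (enorm n v1) (enorm n v2)"
  have "0 \<le> M"
    by (simp add: M_def le_max_iff_disj enorm_nonneg)
  obtain a where strip: "0 \<le> a" "a + 1/4 \<le> 1"
    and far: "\<And>t s. t \<in> {a..a+1/4} \<Longrightarrow> s \<in> {0..1} \<Longrightarrow>
        M/8 \<le> enorm n (\<lambda>i. v1 i - (t - s * \<delta>) * v2 i)"
    using enorm_shifted_line_ge_on_strip[OF assms(2,3), of n v1 v2, folded M_def] by blast
  have "(a + 1/4 - a) * (1 - 0) * rpow (M/8) q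
      \<le> integral {0..1} (\<lambda>t. integral {0..1}
            (\<lambda>s. rpow (enorm n (\<lambda>i. v1 i - (t - s * \<delta>) * v2 i)) q))"
  proof (rule integral2_ge_on_strip)
    show "continuous_on ({0..1} \<times> {0..1})
        (\<lambda>(t, s). rpow (enorm n (\<lambda>i. v1 i - (t - s * \<delta>) * v2 i)) q)"
      unfolding case_prod_beta
      by (intro continuous_on_rpow continuous_on_enorm continuous_intros \<open>0 \<le> q\<close> enorm_nonneg)
    show "rpow (M/8) q \<le> rpow (enorm n (\<lambda>i. v1 i - (t - s * \<delta>) * v2 i)) q"
      if "t \<in> {a..a+1/4}" "s \<in> {0..1}" for t s
      using that \<open>0 \<le> q\<close> \<open>0 \<le> M\<close> by (intro rpow_mono far) auto
  qed (use strip in \<open>auto intro: rpow_nonneg\<close>)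
  moreover have "rpow (M/8) q = rpow (1/8) q * rpow M q"
    using rpow_mult[of "1/8" M q] \<open>0 \<le> M\<close> by (simp add: mult.commute)
  ultimately show ?thesis
    by (simp add: M_def)
qed

theorem lemma3p2:
  fixes p :: real
  assumes "p \<ge> 2"
  shows "\<exists>C>0. \<exists>\<delta>0>0. \<forall>n::nat. \<forall>v1 v2 :: nat \<Rightarrow> real. \<forall>\<delta>::real.
           0 < \<delta> \<and> \<delta> \<le> \<delta>0 \<longrightarrow>
           integral {0..1} (\<lambda>t. integral {0..1}
              (\<lambda>s. rpow (enorm n (\<lambda>i. v1 i - (t - s * \<delta>) * v2 i)) (p - 2)))
           \<ge> C * rpow (max (enorm n v1) (enorm n v2)) (p - 2)"
proof (rule exI[of _ "1/4 * rpow (1/8) (p - 2)"], intro conjI exI[of _ "1/8"] allI impI)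
  show "0 < 1/4 * rpow (1/8) (p - 2)"
    by (simp add: rpow_pos)
  fix n :: nat and v1 v2 :: "nat \<Rightarrow> real" and \<delta> :: real
  assume "0 < \<delta> \<and> \<delta> \<le> 1/8"
  then show "1/4 * rpow (1/8) (p - 2) * rpow (max (enorm n v1) (enorm n v2)) (p - 2)
      \<le> integral {0..1} (\<lambda>t. integral {0..1}
            (\<lambda>s. rpow (enorm n (\<lambda>i. v1 i - (t - s * \<delta>) * v2 i)) (p - 2)))"
    using assms by (intro integral2_rpow_enorm_shifted_line_ge) auto
qed simp

end
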